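(* Let $(A,B,C)$ be a good cut-partition of an \{ISK4,wheel\}-free trigraph $G$, and for each $X\in\{A,B\}$ let $G_X$ be the $X$-block of $G$ with respect to $(A,B,C)$. Then $G_A$ and $G_B$ are \{ISK4,wheel\}-free.
   Context: A trigraph $G$ consists of a finite vertex set $V(G)$ and an adjacency function $\theta_G:\binom{V(G)}{2}\to\{-1,0,1\}$; for distinct $u,v$ write $uv$ for $\{u,v\}$. The pair $uv$ is strongly adjacent if $\theta_G(uv)=1$, semi-adjacent if $\theta_G(uv)=0$, strongly anti-adjacent if $\theta_G(uv)=-1$; $u,v$ are adjacent if $\theta_G(uv)\ge 0$ and anti-adjacent if $\theta_G(uv)\le 0$. For $X\subseteq V(G)$, $G[X]$ is the trigraph on $X$ with the restricted adjacency function, and $G\setminus X=G[V(G)\setminus X]$. A realization of $G$ is a graph on $V(G)$ obtained by turning each semi-adjacent pair into either an edge or a non-edge (strongly adjacent pairs are edges, strongly anti-adjacent pairs non-edges); the full realization turns all semi-adjacent pairs into edges. A stable set is a set of pairwise anti-adjacent vertices; a strong clique is a set of pairwise strongly adjacent vertices. $G$ is connected if its full realization is connected. A narrow path in $G$ between $a$ and $b$ is an induced subtrigraph whose full realization is a path with endpoints $a$ and $b$. An ISK4 is a graph isomorphic to a subdivision of $K_4$. A wheel is a graph consisting of a chordless cycle of length at least four together with a vertex having at least three neighbors on the cycle. A trigraph is \{ISK4,wheel\}-free if none of its realizations has an induced subgraph that is an ISK4 or a wheel. A cut-partition of $G$ is a partition $(A,B,C)$ of $V(G)$ with $A,B$ non-empty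 ($C$ possibly empty) such that every vertex of $A$ is strongly anti-adjacent to every vertex of $B$. A clique-cutset is a (possibly empty) strong clique $C$ with $G\setminus C$ disconnected; a stable 2-cutset is a stable set $C$ of size two with $G\setminus C$ disconnected. A good cut-partition is a cut-partition $(A,B,C)$ such that either $C$ is a clique-cutset with $|C|\le 3$ (type clique), or $C$ is a stable 2-cutset and each of $G[A\cup C]$ and $G[B\cup C]$ contains a narrow path between the two vertices of $C$ (type stable). For $X\in\{A,B\}$, the $X$-block of $G$ with respect to a good cut-partition $(A,B,C)$ is $G[X\cup C]$ if the type is clique, and is the trigraph obtained from $G[X\cup C]$ by making the two vertices of $C$ semi-adjacent if the type is stable. *)

theory Defs
  imports Main
begin

definition trigraph :: "'a set \<Rightarrow> ('a \<Rightarrow> 'a \<Rightarrow> int) \<Rightarrow> bool" where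
  "trigraph V th \<equiv> finite V \<and>
     (\<forall>u\<in>V. \<forall>v\<in>V. u \<noteq> v \<longrightarrow> th u v = th v u \<and> th u v \<in> {-1, 0, 1})"

definition realization :: "'a set \<Rightarrow> ('a \<Rightarrow> 'a \<Rightarrow> int) \<Rightarrow> ('a \<Rightarrow> 'a \<Rightarrow> bool) \<Rightarrow> bool" where
  "realization V th E \<equiv>
     (\<forall>u v. E u v \<longrightarrow> u \<in> V \<and> v \<in> V \<and> u \<noteq> v \<and> E v u) \<and>
     (\<forall>u\<in>V. \<forall>v\<in>V. u \<noteq> v \<longrightarrow> (th u v = 1 \<longrightarrow> E u v) \<and> (th u v = -1 \<longrightarrow> \<not> E u v))"

definition full_adj :: "'a set \<Rightarrow> ('a \<Rightarrow> 'a \<Rightarrow> int) \<Rightarrow> 'a \<Rightarrow> 'a \<Rightarrow> bool" where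
  "full_adj V th u v \<equiv> u \<in> V \<and> v \<in> V \<and> u \<noteq> v \<and> th u v \<ge> 0"

definition graph_connected :: "'a set \<Rightarrow> ('a \<Rightarrow> 'a \<Rightarrow> bool) \<Rightarrow> bool" where
  "graph_connected V E \<equiv> V \<noteq> {} \<and>
     (\<forall>u\<in>V. \<forall>v\<in>V. (\<lambda>x y. x \<in> V \<and> y \<in> V \<and> E x y)\<^sup>*\<^sup>* u v)"

definition tconnected :: "'a set \<Rightarrow> ('a \<Rightarrow> 'a \<Rightarrow> int) \<Rightarrow> bool" where
  "tconnected V th \<equiv> graph_connected V (full_adj V th)"

definition strong_clique :: "'a set \<Rightarrow> ('a \<Rightarrow> 'a \<Rightarrow> int) \<Rightarrow> 'a set \<Rightarrow> bool" where
  "strong_clique V th K \<equiv> K \<subseteq> V \<and> (\<forall>u\<in>K. \<forall>v\<in>K. u \<noteq> v \<longrightarrow> th u v = 1)"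

definition stable_set :: "'a set \<Rightarrow> ('a \<Rightarrow> 'a \<Rightarrow> int) \<Rightarrow> 'a set \<Rightarrow> bool" where
  "stable_set V th S \<equiv> S \<subseteq> V \<and> (\<forall>u\<in>S. \<forall>v\<in>S. u \<noteq> v \<longrightarrow> th u v \<le> 0)"

definition cut_partition ::
  "'a set \<Rightarrow> ('a \<Rightarrow> 'a \<Rightarrow> int) \<Rightarrow> 'a set \<Rightarrow> 'a set \<Rightarrow> 'a set \<Rightarrow> bool" where
  "cut_partition V th A B C \<equiv> A \<union> B \<union> C = V \<and> A \<inter> B = {} \<and> A \<inter> C = {} \<and> B \<inter> C = {} \<and>
     A \<noteq> {} \<and> B \<noteq> {} \<and> (\<forall>a\<in>A. \<forall>b\<in>B. th a b = -1)"

definition clique_cutset :: "'a set \<Rightarrow> ('a \<Rightarrow> 'a \<Rightarrow> int) \<Rightarrow> 'a set \<Rightarrow> bool" where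
  "clique_cutset V th C \<equiv> strong_clique V th C \<and> \<not> tconnected (V - C) th"

definition stable_2cutset :: "'a set \<Rightarrow> ('a \<Rightarrow> 'a \<Rightarrow> int) \<Rightarrow> 'a set \<Rightarrow> bool" where
  "stable_2cutset V th C \<equiv> stable_set V th C \<and> card C = 2 \<and> \<not> tconnected (V - C) th"

definition consec :: "'a list \<Rightarrow> 'a \<Rightarrow> 'a \<Rightarrow> bool" where
  "consec p u v \<equiv> \<exists>i. Suc i < length p \<and>
     ((p ! i = u \<and> p ! Suc i = v) \<or> (p ! i = v \<and> p ! Suc i = u))"

(* induced subtrigraph of (V,th) whose full realization is a path with ends a and b *)
definition narrow_path :: "'a set \<Rightarrow> ('a \<Rightarrow> 'a \<Rightarrow> int) \<Rightarrow> 'a \<Rightarrow> 'a \<Rightarrow> bool" where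
  "narrow_path V th a b \<equiv> \<exists>p. p \<noteq> [] \<and> distinct p \<and> hd p = a \<and> last p = b \<and> set p \<subseteq> V \<and>
     (\<forall>u\<in>set p. \<forall>v\<in>set p. u \<noteq> v \<longrightarrow> (th u v \<ge> 0 \<longleftrightarrow> consec p u v))"

definition good_cut_partition ::
  "'a set \<Rightarrow> ('a \<Rightarrow> 'a \<Rightarrow> int) \<Rightarrow> 'a set \<Rightarrow> 'a set \<Rightarrow> 'a set \<Rightarrow> bool" where
  "good_cut_partition V th A B C \<equiv> cut_partition V th A B C \<and>
     ((clique_cutset V th C \<and> card C \<le> 3) \<or>
      (stable_2cutset V th C \<and>
        (\<exists>a b. a \<noteq> b \<and> C = {a, b} \<and> narrow_path (A \<union> C) th a b \<and> narrow_path (B \<union> C) th a b)))"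

(* Adjacency function of a block: for type stable (C a stable pair) the two vertices
   of C become semi-adjacent; for type clique it is unchanged. The X-block has
   vertex set X \<union> C. *)
definition block_theta :: "('a \<Rightarrow> 'a \<Rightarrow> int) \<Rightarrow> 'a set \<Rightarrow> 'a \<Rightarrow> 'a \<Rightarrow> int" where
  "block_theta th C \<equiv>
     (if \<exists>a b. a \<noteq> b \<and> C = {a, b} \<and> th a b \<le> 0
      then (\<lambda>u v. if u \<noteq> v \<and> {u, v} = C then 0 else th u v) else th)"

definition consec_cyc :: "'a list \<Rightarrow> 'a \<Rightarrow> 'a \<Rightarrow> bool" where
  "consec_cyc cs u v \<equiv> \<exists>i < length cs. {cs ! i, cs ! ((i + 1) mod length cs)} = {u, v}"

definition hole :: "('a \<Rightarrow> 'a \<Rightarrow> bool) \<Rightarrow> 'a set \<Rightarrow> bool" where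
  "hole E H \<equiv> \<exists>cs. distinct cs \<and> length cs \<ge> 4 \<and> set cs = H \<and>
     (\<forall>u\<in>H. \<forall>v\<in>H. u \<noteq> v \<longrightarrow> (E u v \<longleftrightarrow> consec_cyc cs u v))"

definition wheel_in :: "('a \<Rightarrow> 'a \<Rightarrow> bool) \<Rightarrow> 'a set \<Rightarrow> bool" where
  "wheel_in E X \<equiv> \<exists>H c. X = insert c H \<and> c \<notin> H \<and> hole E H \<and> card {v \<in> H. E c v} \<ge> 3"

(* the subgraph of E induced on X is (isomorphic to) a subdivision of K4:
   branch vertices b 0..b 3, and for i<j<4 a path p i j from b i to b j,
   paths internally disjoint, and the edges are exactly the path edges *)
definition isk4_in :: "('a \<Rightarrow> 'a \<Rightarrow> bool) \<Rightarrow> 'a set \<Rightarrow> bool" where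
  "isk4_in E X \<equiv> \<exists>(b :: nat \<Rightarrow> 'a) (p :: nat \<Rightarrow> nat \<Rightarrow> 'a list).
     inj_on b {..<4} \<and>
     (\<forall>i j. i < j \<and> j < 4 \<longrightarrow>
        distinct (p i j) \<and> length (p i j) \<ge> 2 \<and> hd (p i j) = b i \<and> last (p i j) = b j \<and>
        set (butlast (tl (p i j))) \<inter> b ` {..<4} = {}) \<and>
     (\<forall>i j k l. i < j \<and> j < 4 \<and> k < l \<and> l < 4 \<and> (i, j) \<noteq> (k, l) \<longrightarrow>
        set (p i j) \<inter> set (p k l) \<subseteq> b ` {..<4}) \<and>
     X = (\<Union>i<4. \<Union>j\<in>{i<..<4}. set (p i j)) \<and>
     (\<forall>u\<in>X. \<forall>v\<in>X. u \<noteq> v \<longrightarrow>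
        (E u v \<longleftrightarrow> (\<exists>i j. i < j \<and> j < 4 \<and> consec (p i j) u v)))"

definition isk4_wheel_free :: "'a set \<Rightarrow> ('a \<Rightarrow> 'a \<Rightarrow> int) \<Rightarrow> bool" where
  "isk4_wheel_free V th \<equiv> \<forall>E. realization V th E \<longrightarrow>
     \<not> (\<exists>X \<subseteq> V. isk4_in E X \<or> wheel_in E X)"

end

theory Submission
  imports Defs
begin

text \<open>Let \<open>E\<close> be a realization of the \<open>A\<close>-block with an induced ISK4 or wheel on \<open>X\<close>.
  Unless the block is of stable type with \<open>C = {a, b}\<close>, \<open>ab\<close> strongly anti-adjacent in \<open>G\<close> and
  \<open>ab\<close> an edge of \<open>E\<close>, the relation \<open>E\<close> is also a realization of \<open>G[A \<union> C]\<close>; it extends to a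
  realization of \<open>G\<close> in which \<open>X\<close> still induces the same graph. In the remaining case, delete the
  edge \<open>ab\<close> and glue in a narrow path from \<open>a\<close> to \<open>b\<close> through \<open>B\<close>: since \<open>A\<close> and \<open>B\<close> are
  strongly anti-adjacent, this yields a realization of \<open>G\<close> in which the ISK4 or wheel reappears
  with the edge \<open>ab\<close> subdivided. Subdividing an edge of an ISK4 gives an ISK4, and subdividing an
  edge of a wheel gives a wheel, except for a spoke of a wheel with exactly three spokes; but such
  a wheel is itself an ISK4.\<close>

section \<open>Consecutive vertices of paths and cycles\<close>

lemma consec_commute: "consec p u v \<longleftrightarrow> consec p v u"
  unfolding consec_def by blast

lemma consec_in_set: "consec p u v \<Longrightarrow> u \<in> set p \<and> v \<in> set p"
  unfolding consec_def by (auto intro: nth_mem)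

lemma consec_Nil [simp]: "\<not> consec [] u v"
  unfolding consec_def by auto

lemma consec_Cons:
  "consec (x # xs) u v \<longleftrightarrow> (xs \<noteq> [] \<and> {u, v} = {x, hd xs}) \<or> consec xs u v"
proof
  assume "consec (x # xs) u v"
  then obtain i where i: "Suc i < length (x # xs)"
    "((x # xs) ! i = u \<and> (x # xs) ! Suc i = v) \<or> ((x # xs) ! i = v \<and> (x # xs) ! Suc i = u)"
    unfolding consec_def by blast
  show "(xs \<noteq> [] \<and> {u, v} = {x, hd xs}) \<or> consec xs u v"
  proof (cases i)
    case 0
    then show ?thesis using i by (cases xs) auto
  next
    case (Suc j)
    then show ?thesis using i unfolding consec_def by auto
  qed
next
  assume "(xs \<noteq> [] \<and> {u, v} = {x, hd xs}) \<or> consec xs u v"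
  then show "consec (x # xs) u v"
  proof
    assume h: "xs \<noteq> [] \<and> {u, v} = {x, hd xs}"
    then have "Suc 0 < length (x # xs)" "(x # xs) ! Suc 0 = hd xs"
      by (cases xs; auto)+
    then show ?thesis using h unfolding consec_def by (metis doubleton_eq_iff nth_Cons_0)
  next
    assume "consec xs u v"
    then obtain i where "Suc i < length xs"
      "(xs ! i = u \<and> xs ! Suc i = v) \<or> (xs ! i = v \<and> xs ! Suc i = u)"
      unfolding consec_def by blast
    then show ?thesis unfolding consec_def by (intro exI[of _ "Suc i"]) auto
  qed
qed

lemma consec_singleton [simp]: "\<not> consec [x] u v"
  by (simp add: consec_Cons)

lemma consec_append:
  "consec (xs @ ys) u v \<longleftrightarrow>
     consec xs u v \<or> consec ys u v \<or> (xs \<noteq> [] \<and> ys \<noteq> [] \<and> {u, v} = {last xs, hd ys})"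
proof (induction xs)
  case (Cons x xs)
  then show ?case by (cases "xs = []") (auto simp: consec_Cons)
qed simp

lemma consec_rev [simp]: "consec (rev xs) u v \<longleftrightarrow> consec xs u v"
proof (induction xs)
  case (Cons x xs)
  then show ?case
    by (cases "xs = []") (auto simp: consec_append consec_Cons last_rev insert_commute)
qed simp

lemma consec_irrefl: "distinct p \<Longrightarrow> \<not> consec p u u"
  unfolding consec_def by (auto simp: nth_eq_iff_index_eq)

lemma consec_cyc_conv_consec:
  assumes ne: "xs \<noteq> []"
  shows "consec_cyc xs u v \<longleftrightarrow> consec xs u v \<or> {u, v} = {last xs, hd xs}"
proof -
  let ?n = "length xs"
  have last: "last xs = xs ! (?n - 1)" and hd: "hd xs = xs ! 0"
    using ne by (simp_all add: last_conv_nth hd_conv_nth)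
  show ?thesis
  proof
    assume "consec_cyc xs u v"
    then obtain i where i: "i < ?n" "{xs ! i, xs ! ((i + 1) mod ?n)} = {u, v}"
      unfolding consec_cyc_def by blast
    show "consec xs u v \<or> {u, v} = {last xs, hd xs}"
    proof (cases "Suc i < ?n")
      case True
      then have "(i + 1) mod ?n = Suc i" by simp
      then show ?thesis using i True unfolding consec_def by (auto simp: doubleton_eq_iff)
    next
      case False
      then have "i = ?n - 1" using i(1) by simp
      then have "(i + 1) mod ?n = 0" using ne by simp
      then show ?thesis using i(2) \<open>i = ?n - 1\<close> by (simp add: last hd)
    qed
  next
    assume "consec xs u v \<or> {u, v} = {last xs, hd xs}"
    then show "consec_cyc xs u v"
    proof
      assume "consec xs u v"
      then obtain i where i: "Suc i < ?n"
        "(xs ! i = u \<and> xs ! Suc i = v) \<or> (xs ! i = v \<and> xs ! Suc i = u)"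
        unfolding consec_def by blast
      then have "(i + 1) mod ?n = Suc i" by simp
      then show ?thesis unfolding consec_cyc_def using i by (intro exI[of _ i]) auto
    next
      assume "{u, v} = {last xs, hd xs}"
      moreover have "?n - 1 < ?n" "(?n - 1 + 1) mod ?n = 0" using ne by auto
      ultimately show ?thesis unfolding consec_cyc_def last hd
        by (intro exI[of _ "?n - 1"]) auto
    qed
  qed
qed

lemma consec_cyc_append_commute: "consec_cyc (xs @ ys) u v \<longleftrightarrow> consec_cyc (ys @ xs) u v"
proof (cases "xs = [] \<or> ys = []")
  case False
  then show ?thesis
    by (simp add: consec_cyc_conv_consec consec_append) blast
qed auto

lemma consec_cyc_in_set: "consec_cyc cs u v \<Longrightarrow> u \<in> set cs \<and> v \<in> set cs"
proof -
  assume "consec_cyc cs u v"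
  then obtain i where i: "i < length cs" "{cs ! i, cs ! ((i + 1) mod length cs)} = {u, v}"
    unfolding consec_cyc_def by blast
  have "0 < length cs" using i(1) by linarith
  then have "(i + 1) mod length cs < length cs" by simp
  then have "{cs ! i, cs ! ((i + 1) mod length cs)} \<subseteq> set cs" using i(1) by simp
  then show ?thesis unfolding i(2) by simp
qed

section \<open>Replacing an edge of a path or cycle by a path\<close>

lemma set_butlast_tl:
  assumes "distinct l" "length l \<ge> 2"
  shows "set (butlast (tl l)) = set l - {hd l, last l}"
proof -
  obtain x m y where "l = x # m @ [y]"
    using assms(2) by (metis Suc_le_length_iff append_butlast_last_id list.size(3) nat.distinct(1)
        numeral_2_eq_2 le_zero_eq)
  then show ?thesis using assms(1) by auto
qed

lemma splice_at:
  assumes dL: "distinct (L1 @ x # y # L2)" and dQ: "distinct Q"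
    and hQ: "hd Q = x" and lQ: "last Q = y" and Q: "set Q \<inter> set (L1 @ x # y # L2) = {x, y}"
    and nxy: "\<not> consec Q x y"
  shows "distinct (L1 @ Q @ L2)"
    and "hd (L1 @ Q @ L2) = hd (L1 @ x # y # L2)"
    and "last (L1 @ Q @ L2) = last (L1 @ x # y # L2)"
    and "set (L1 @ Q @ L2) = set (L1 @ x # y # L2) \<union> set Q"
    and "length (L1 @ Q @ L2) \<ge> length (L1 @ x # y # L2)"
    and "consec (L1 @ Q @ L2) u v \<longleftrightarrow>
           (consec (L1 @ x # y # L2) u v \<and> {u, v} \<noteq> {x, y}) \<or> consec Q u v"
proof -
  have xy: "x \<noteq> y" and xyL: "x \<notin> set L1" "y \<notin> set L1" "x \<notin> set L2" "y \<notin> set L2"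
    using dL by auto
  have Qne: "Q \<noteq> []" and xyQ: "x \<in> set Q" "y \<in> set Q" using Q by auto
  show "distinct (L1 @ Q @ L2)" using dL dQ Q by auto
  show "hd (L1 @ Q @ L2) = hd (L1 @ x # y # L2)" using Qne hQ by (cases L1) auto
  show "last (L1 @ Q @ L2) = last (L1 @ x # y # L2)" using Qne lQ by (cases L2) auto
  show "set (L1 @ Q @ L2) = set (L1 @ x # y # L2) \<union> set Q" using xyQ by auto
  have "length Q \<ge> 2" using Qne hQ lQ xy by (cases Q; cases "tl Q") auto
  then show "length (L1 @ Q @ L2) \<ge> length (L1 @ x # y # L2)" by simp
  have new: "consec (L1 @ Q @ L2) u v \<longleftrightarrow> consec L1 u v \<or> consec Q u v \<or> consec L2 u v
      \<or> (L1 \<noteq> [] \<and> {u, v} = {last L1, x}) \<or> (L2 \<noteq> [] \<and> {u, v} = {y, hd L2})"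
    using Qne hQ lQ by (simp add: consec_append) blast
  have old: "consec (L1 @ x # y # L2) u v \<longleftrightarrow> consec L1 u v \<or> {u, v} = {x, y} \<or> consec L2 u v
      \<or> (L1 \<noteq> [] \<and> {u, v} = {last L1, x}) \<or> (L2 \<noteq> [] \<and> {u, v} = {y, hd L2})"
    by (simp add: consec_append consec_Cons) blast
  \<comment> \<open>apart from the replaced edge, \<open>{x, y}\<close> is a consecutive pair of neither list\<close>
  have "\<not> (consec L1 u v \<or> consec L2 u v \<or> (L1 \<noteq> [] \<and> {u, v} = {last L1, x})
      \<or> (L2 \<noteq> [] \<and> {u, v} = {y, hd L2}) \<or> consec Q u v)" if "{u, v} = {x, y}"
    using that xy xyL nxy last_in_set hd_in_set consec_in_set consec_commute
    by (metis doubleton_eq_iff)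
  then show "consec (L1 @ Q @ L2) u v \<longleftrightarrow>
      (consec (L1 @ x # y # L2) u v \<and> {u, v} \<noteq> {x, y}) \<or> consec Q u v"
    unfolding new old by blast
qed

lemma splice_path:
  assumes dL: "distinct L" and cL: "consec L a b" and dP: "distinct P"
    and hP: "hd P = a" and lP: "last P = b" and PL: "set P \<inter> set L = {a, b}"
    and nab: "\<not> consec P a b"
  obtains L' where "distinct L'" "hd L' = hd L" "last L' = last L" "set L' = set L \<union> set P"
    "length L' \<ge> length L"
    "\<And>u v. consec L' u v \<longleftrightarrow> (consec L u v \<and> {u, v} \<noteq> {a, b}) \<or> consec P u v"
proof -
  obtain i where i: "Suc i < length L" "{L ! i, L ! Suc i} = {a, b}"
    using cL unfolding consec_def by (auto simp: doubleton_eq_iff)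
  define x y where "x = L ! i" and "y = L ! Suc i"
  define L1 L2 where "L1 = take i L" and "L2 = drop (Suc (Suc i)) L"
  have L: "L = L1 @ x # y # L2"
    unfolding x_def y_def L1_def L2_def using i(1)
    by (metis Cons_nth_drop_Suc Suc_lessD append_take_drop_id)
  have xy: "{x, y} = {a, b}" using i(2) x_def y_def by simp
  define Q where "Q = (if x = a then P else rev P)"
  have a_ne_b: "a \<noteq> b" using cL dL consec_irrefl by metis
  have Q: "distinct Q" "hd Q = x" "last Q = y" "set Q = set P" "consec Q = consec P"
    using xy a_ne_b dP hP lP PL unfolding Q_def
    by (auto simp: hd_rev last_rev doubleton_eq_iff fun_eq_iff)
  have "\<not> consec Q x y" using nab xy Q(5) consec_commute by (metis doubleton_eq_iff)
  then show ?thesis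
    using that[of "L1 @ Q @ L2"] splice_at[of L1 x y L2 Q] dL Q PL xy unfolding L by auto
qed

lemma consec_cyc_rotate_at_edge:
  assumes d: "distinct cs" and len: "length cs \<ge> 3" and c: "consec_cyc cs a b" and ab: "a \<noteq> b"
  obtains cs' where "distinct cs'" "set cs' = set cs" "length cs' = length cs"
    "\<And>u v. consec_cyc cs' u v \<longleftrightarrow> consec_cyc cs u v" "consec cs' a b" "last cs' \<notin> {a, b}"
proof -
  have "a \<in> set cs" using consec_cyc_in_set[OF c] by blast
  then obtain L1 L2 where cs: "cs = L1 @ a # L2" by (meson split_list)
  define R where "R = L2 @ L1"
  have rot: "consec_cyc (a # R) u v \<longleftrightarrow> consec_cyc cs u v" for u v
    unfolding R_def cs using consec_cyc_append_commute[of L1 "a # L2"] by simp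
  have dR: "distinct (a # R)" and sR: "set (a # R) = set cs" and lR: "length (a # R) = length cs"
    using d cs R_def by auto
  have Rne: "R \<noteq> []" using lR len by auto
  have "consec (a # R) a b \<or> {a, b} = {last (a # R), a}"
    using rot[of a b] c consec_cyc_conv_consec[of "a # R"] by simp
  moreover have "\<not> consec R a b" using dR consec_in_set[of R a b] by auto
  ultimately have "hd R = b \<or> last R = b"
    using Rne ab by (auto simp: consec_Cons doubleton_eq_iff)
  then show ?thesis
  proof
    assume "hd R = b"
    then obtain R' where R': "R = b # R'" using Rne by (cases R) auto
    have "R' \<noteq> []" using lR len R' by auto
    then have "last R' \<notin> {a, b}" using dR last_in_set unfolding R' by fastforce
    then show ?thesis using that[of "a # b # R'"] \<open>R' \<noteq> []\<close> dR sR lR rot unfolding R'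
      by (simp add: consec_Cons)
  next
    assume "last R = b"
    then obtain R' where R': "R = R' @ [b]" using Rne by (metis append_butlast_last_id)
    have "R' \<noteq> []" using lR len R' by auto
    then have "last R' \<notin> {a, b}" using dR last_in_set unfolding R' by fastforce
    moreover have "consec_cyc (b # a # R') u v \<longleftrightarrow> consec_cyc cs u v" for u v
      using consec_cyc_append_commute[of "[b]" "a # R'" u v] rot[of u v] R' by simp
    ultimately show ?thesis using that[of "b # a # R'"] \<open>R' \<noteq> []\<close> dR sR lR R'
      by (auto simp: consec_Cons)
  qed
qed

lemma consec_cyc_splice:
  assumes d: "distinct cs" and len: "length cs \<ge> 3" and c: "consec_cyc cs a b" and ab: "a \<noteq> b"
    and dP: "distinct P" and hP: "hd P = a" and lP: "last P = b"
    and Pcs: "set P \<inter> set cs = {a, b}" and nab: "\<not> consec P a b"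
  obtains cs' where "distinct cs'" "set cs' = set cs \<union> set P" "length cs' \<ge> length cs"
    "\<And>u v. consec_cyc cs' u v \<longleftrightarrow> (consec_cyc cs u v \<and> {u, v} \<noteq> {a, b}) \<or> consec P u v"
proof -
  obtain cs2 where cs2: "distinct cs2" "set cs2 = set cs" "length cs2 = length cs"
    "\<And>u v. consec_cyc cs2 u v \<longleftrightarrow> consec_cyc cs u v" "consec cs2 a b" "last cs2 \<notin> {a, b}"
    using consec_cyc_rotate_at_edge[OF d len c ab] by blast
  obtain L where L: "distinct L" "hd L = hd cs2" "last L = last cs2" "set L = set cs2 \<union> set P"
    "length L \<ge> length cs2"
    "\<And>u v. consec L u v \<longleftrightarrow> (consec cs2 u v \<and> {u, v} \<noteq> {a, b}) \<or> consec P u v"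
    using splice_path[OF cs2(1,5) dP hP lP] Pcs cs2(2) nab by metis
  have ne: "cs2 \<noteq> []" "L \<noteq> []" using cs2(5) L(4) by (auto dest: consec_in_set)
  \<comment> \<open>the closing edge of the opened cycle is not \<open>ab\<close>, as \<open>last cs2 \<notin> {a, b}\<close>\<close>
  have "consec_cyc L u v \<longleftrightarrow> (consec_cyc cs u v \<and> {u, v} \<noteq> {a, b}) \<or> consec P u v" for u v
    using consec_cyc_conv_consec[OF ne(2)] consec_cyc_conv_consec[OF ne(1)] cs2(4,6) L(2,3,6)
    by (auto simp: doubleton_eq_iff)
  then show ?thesis using that[of L] L(1,4,5) cs2(2,3) by auto
qed

section \<open>Subdivisions of K4\<close>

lemma pairs_less_4:
  "{(i, j). (i::nat) < j \<and> j < 4} = {(0, 1), (0, 2), (0, 3), (1, 2), (1, 3), (2, 3)}"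
  by (auto simp: numeral_eq_Suc less_Suc_eq)

lemma ex_pair_less_4:
  "(\<exists>i j. (i::nat) < j \<and> j < 4 \<and> P i j) \<longleftrightarrow> P 0 1 \<or> P 0 2 \<or> P 0 3 \<or> P 1 2 \<or> P 1 3 \<or> P 2 3"
proof -
  have "(\<exists>i j. i < j \<and> j < 4 \<and> P i j) \<longleftrightarrow> (\<exists>(i, j) \<in> {(i, j). (i::nat) < j \<and> j < 4}. P i j)"
    by blast
  then show ?thesis unfolding pairs_less_4 by simp
qed

lemma mem_UN_pairs_less_4:
  "x \<in> (\<Union>i<(4::nat). \<Union>j\<in>{i<..<4}. f i j) \<longleftrightarrow> (\<exists>i j. i < j \<and> j < 4 \<and> x \<in> f i j)"
  by force

lemma UN_pairs_less_4:
  "(\<Union>i<(4::nat). \<Union>j\<in>{i<..<4}. f i j) = f 0 1 \<union> f 0 2 \<union> f 0 3 \<union> f 1 2 \<union> f 1 3 \<union> f 2 3"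
  unfolding set_eq_iff mem_UN_pairs_less_4 ex_pair_less_4 by blast

lemma ex_pair_split:
  assumes "(i::nat) < j" "j < n"
  shows "(\<exists>k l. k < l \<and> l < n \<and> f k l) \<longleftrightarrow> f i j \<or> (\<exists>k l. k < l \<and> l < n \<and> (k, l) \<noteq> (i, j) \<and> f k l)"
  using assms by blast

lemma ex_pair_replace:
  assumes "(i::nat) < j" "j < n" "q i j = L" "\<And>k l. (k, l) \<noteq> (i, j) \<Longrightarrow> q k l = p k l"
  shows "(\<exists>k l. k < l \<and> l < n \<and> Q (q k l)) \<longleftrightarrow>
    Q L \<or> (\<exists>k l. k < l \<and> l < n \<and> (k, l) \<noteq> (i, j) \<and> Q (p k l))"
proof -
  have "(k, l) \<noteq> (i, j) \<Longrightarrow> Q (q k l) \<longleftrightarrow> Q (p k l)" for k l using assms(4) by simp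
  then have "(\<exists>k l. k < l \<and> l < n \<and> (k, l) \<noteq> (i, j) \<and> Q (q k l)) \<longleftrightarrow>
      (\<exists>k l. k < l \<and> l < n \<and> (k, l) \<noteq> (i, j) \<and> Q (p k l))"
    by blast
  then show ?thesis using ex_pair_split[OF assms(1,2), of "\<lambda>k l. Q (q k l)"] assms(3) by simp
qed

locale isk4_model =
  fixes E :: "'a \<Rightarrow> 'a \<Rightarrow> bool" and X :: "'a set"
    and br :: "nat \<Rightarrow> 'a" and p :: "nat \<Rightarrow> nat \<Rightarrow> 'a list"
  assumes inj_br: "inj_on br {..<4}"
    and path: "\<And>i j. i < j \<Longrightarrow> j < 4 \<Longrightarrow>
      distinct (p i j) \<and> length (p i j) \<ge> 2 \<and> hd (p i j) = br i \<and> last (p i j) = br j \<and>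
      set (butlast (tl (p i j))) \<inter> br ` {..<4} = {}"
    and paths_meet: "\<And>i j k l. i < j \<Longrightarrow> j < 4 \<Longrightarrow> k < l \<Longrightarrow> l < 4 \<Longrightarrow> (i, j) \<noteq> (k, l) \<Longrightarrow>
      set (p i j) \<inter> set (p k l) \<subseteq> br ` {..<4}"
    and X_eq: "X = (\<Union>i<4. \<Union>j\<in>{i<..<4}. set (p i j))"
    and edges: "\<And>u v. u \<in> X \<Longrightarrow> v \<in> X \<Longrightarrow> u \<noteq> v \<Longrightarrow>
      E u v \<longleftrightarrow> (\<exists>i j. i < j \<and> j < 4 \<and> consec (p i j) u v)"

lemma isk4_in_iff_model: "isk4_in E X \<longleftrightarrow> (\<exists>br p. isk4_model E X br p)"
  by (simp add: isk4_in_def isk4_model_def imp_conjL Ball_def)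

context isk4_model
begin

lemma path_subset: "i < j \<Longrightarrow> j < 4 \<Longrightarrow> set (p i j) \<subseteq> X"
  unfolding X_eq subset_iff mem_UN_pairs_less_4 by blast

lemma branch_on_path:
  assumes "i < j" "j < 4" "z \<in> set (p i j)" "z \<in> br ` {..<4}"
  shows "z = br i \<or> z = br j"
  using path[OF assms(1,2)] set_butlast_tl[of "p i j"] assms(3,4) by auto

lemma edge_on_unique_path:
  assumes ij: "i < j" "j < 4" "consec (p i j) a b" and kl: "k < l" "l < 4" "consec (p k l) a b"
  shows "(i, j) = (k, l)"
proof (rule ccontr)
  assume ne: "(i, j) \<noteq> (k, l)"
  have "distinct (p i j)" using path[OF ij(1,2)] by simp
  then have ab: "a \<noteq> b" using ij(3) consec_irrefl by metis
  have abij: "a \<in> set (p i j)" "b \<in> set (p i j)" using consec_in_set[OF ij(3)] by auto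
  have abkl: "a \<in> set (p k l)" "b \<in> set (p k l)" using consec_in_set[OF kl(3)] by auto
  have br: "a \<in> br ` {..<4}" "b \<in> br ` {..<4}"
    using paths_meet[OF ij(1,2) kl(1,2) ne] abij abkl by auto
  have "{a, b} = {br i, br j}"
    using branch_on_path[OF ij(1,2) abij(1) br(1)] branch_on_path[OF ij(1,2) abij(2) br(2)] ab
    by auto
  moreover have "{a, b} = {br k, br l}"
    using branch_on_path[OF kl(1,2) abkl(1) br(1)] branch_on_path[OF kl(1,2) abkl(2) br(2)] ab
    by auto
  ultimately have "(br i = br k \<and> br j = br l) \<or> (br i = br l \<and> br j = br k)"
    by (auto simp: doubleton_eq_iff)
  moreover have inj: "m = n" if "m < 4" "n < 4" "br m = br n" for m n
    using inj_br that by (auto dest: inj_onD)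
  moreover have "i < 4" "k < 4" using ij(1,2) kl(1,2) by auto
  ultimately have "(i = k \<and> j = l) \<or> (i = l \<and> j = k)"
    using inj[of i k] inj[of j l] inj[of i l] inj[of j k] ij(2) kl(2) by blast
  then show False using ne ij(1) kl(1) by auto
qed

lemma model_cong:
  assumes "\<And>u v. u \<in> X \<Longrightarrow> v \<in> X \<Longrightarrow> E' u v = E u v"
  shows "isk4_model E' X br p"
proof (rule isk4_model.intro[OF inj_br path paths_meet X_eq])
  fix u v assume "u \<in> X" "v \<in> X" "u \<noteq> v"
  then show "E' u v \<longleftrightarrow> (\<exists>i j. i < j \<and> j < 4 \<and> consec (p i j) u v)" using assms edges by simp
qed

lemma branch_in_X:
  assumes "k < 4"
  shows "br k \<in> X"
proof -
  obtain i j where ij: "i < j" "j < 4" and br_k: "br k = hd (p i j) \<or> br k = last (p i j)"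
  proof (cases "k < 3")
    case True
    then show ?thesis using that[of k 3] path[of k 3] by simp
  next
    case False
    then have "k = 3" using assms by simp
    then show ?thesis using that[of 0 3] path[of 0 3] by simp
  qed
  have "p i j \<noteq> []" using path[OF ij] by auto
  then have "br k \<in> set (p i j)" using br_k by (metis hd_in_set last_in_set)
  then show ?thesis by (rule subsetD[OF path_subset[OF ij]])
qed

lemma replace_path:
  assumes ij: "i < j" "j < 4"
    and L: "distinct L" "length L \<ge> 2" "hd L = br i" "last L = br j"
    and LX: "set (p i j) \<subseteq> set L" "set L \<inter> X \<subseteq> set (p i j)"
    and q_ij: "q i j = L" and q_other: "\<And>k l. (k, l) \<noteq> (i, j) \<Longrightarrow> q k l = p k l"
    and edges': "\<And>u v. u \<in> X \<union> set L \<Longrightarrow> v \<in> X \<union> set L \<Longrightarrow> u \<noteq> v \<Longrightarrow>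
      E' u v \<longleftrightarrow> (\<exists>k l. k < l \<and> l < 4 \<and> consec (q k l) u v)"
  shows "isk4_model E' (X \<union> set L) br q"
proof
  show "inj_on br {..<4}" by (rule inj_br)
next
  \<comment> \<open>a vertex of \<open>L\<close> in \<open>X\<close> is on \<open>p i j\<close>, so a branch vertex on \<open>L\<close> is one of its ends\<close>
  have L_branch: "set L \<inter> br ` {..<4} \<subseteq> {br i, br j}"
    using LX(2) branch_in_X branch_on_path[OF ij] by blast
  fix k l :: nat assume kl: "k < l" "l < 4"
  show "distinct (q k l) \<and> length (q k l) \<ge> 2 \<and> hd (q k l) = br k \<and> last (q k l) = br l \<and>
      set (butlast (tl (q k l))) \<inter> br ` {..<4} = {}"
  proof (cases "(k, l) = (i, j)")
    case True
    have "set (butlast (tl L)) = set L - {br i, br j}" using set_butlast_tl[OF L(1,2)] L(3,4) by simp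
    then show ?thesis using True q_ij L L_branch by auto
  next
    case False
    then show ?thesis using path[OF kl] q_other[OF False] by simp
  qed
next
  have L_meets: "set L \<inter> set (p k l) \<subseteq> br ` {..<4}" if "k < l" "l < 4" "(i, j) \<noteq> (k, l)" for k l
    using LX(2) path_subset[OF that(1,2)] paths_meet[OF ij that] by blast
  fix i' j' k l :: nat
  assume kl: "i' < j'" "j' < 4" "k < l" "l < 4" "(i', j') \<noteq> (k, l)"
  consider "(i', j') = (i, j)" | "(k, l) = (i, j)" | "(i', j') \<noteq> (i, j)" "(k, l) \<noteq> (i, j)"
    by blast
  then show "set (q i' j') \<inter> set (q k l) \<subseteq> br ` {..<4}"
  proof cases
    case 1
    then show ?thesis using L_meets[of k l] kl q_ij q_other[of k l] by auto
  next
    case 2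
    then show ?thesis using L_meets[of i' j'] kl q_ij q_other[of i' j'] by auto
  next
    case 3
    then show ?thesis using paths_meet[OF kl] q_other by simp
  qed
next
  show "X \<union> set L = (\<Union>k<4. \<Union>l\<in>{k<..<4}. set (q k l))"
  proof (rule set_eqI)
    fix z
    have X_iff: "z \<in> X \<longleftrightarrow>
        z \<in> set (p i j) \<or> (\<exists>k l. k < l \<and> l < 4 \<and> (k, l) \<noteq> (i, j) \<and> z \<in> set (p k l))"
      unfolding X_eq mem_UN_pairs_less_4 by (rule ex_pair_split[OF ij])
    have U_iff: "z \<in> (\<Union>k<4. \<Union>l\<in>{k<..<4}. set (q k l)) \<longleftrightarrow>
        z \<in> set L \<or> (\<exists>k l. k < l \<and> l < 4 \<and> (k, l) \<noteq> (i, j) \<and> z \<in> set (p k l))"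
      unfolding mem_UN_pairs_less_4
      by (rule ex_pair_replace[of i j 4 q L p "\<lambda>xs. z \<in> set xs", OF ij q_ij q_other])
    show "z \<in> X \<union> set L \<longleftrightarrow> z \<in> (\<Union>k<4. \<Union>l\<in>{k<..<4}. set (q k l))"
      unfolding Un_iff X_iff U_iff using subsetD[OF LX(1), of z] by blast
  qed
qed (rule edges')

lemma replace_path_at_edge:
  assumes ij: "i < j" "j < 4" "consec (p i j) a b"
    and q_ij: "q i j = L" and q_other: "\<And>k l. (k, l) \<noteq> (i, j) \<Longrightarrow> q k l = p k l"
    and L_consec: "\<And>u v. consec L u v \<longleftrightarrow> (consec (p i j) u v \<and> {u, v} \<noteq> {a, b}) \<or> consec P u v"
  shows "(\<exists>k l. k < l \<and> l < 4 \<and> consec (q k l) u v) \<longleftrightarrow>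
    ((\<exists>k l. k < l \<and> l < 4 \<and> consec (p k l) u v) \<and> {u, v} \<noteq> {a, b}) \<or> consec P u v"
proof -
  have q_split: "(\<exists>k l. k < l \<and> l < 4 \<and> consec (q k l) u v) \<longleftrightarrow>
      consec L u v \<or> (\<exists>k l. k < l \<and> l < 4 \<and> (k, l) \<noteq> (i, j) \<and> consec (p k l) u v)"
    by (rule ex_pair_replace[of i j 4 q L p "\<lambda>xs. consec xs u v", OF ij(1,2) q_ij q_other])
  have p_split: "(\<exists>k l. k < l \<and> l < 4 \<and> consec (p k l) u v) \<longleftrightarrow>
      consec (p i j) u v \<or> (\<exists>k l. k < l \<and> l < 4 \<and> (k, l) \<noteq> (i, j) \<and> consec (p k l) u v)"
    by (rule ex_pair_split[OF ij(1,2)])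
  show ?thesis
  proof (cases "{u, v} = {a, b}")
    case True
    \<comment> \<open>the edge \<open>ab\<close> lies on \<open>p i j\<close> only\<close>
    have "consec (p k l) u v \<longleftrightarrow> consec (p k l) a b" for k l
      using True consec_commute by (metis doubleton_eq_iff)
    then have "\<not> (\<exists>k l. k < l \<and> l < 4 \<and> (k, l) \<noteq> (i, j) \<and> consec (p k l) u v)"
      using edge_on_unique_path[OF ij] by metis
    then show ?thesis unfolding q_split L_consec using True by blast
  next
    case False
    then show ?thesis unfolding q_split p_split L_consec by blast
  qed
qed

end

lemma isk4_in_cong:
  assumes "\<And>u v. u \<in> X \<Longrightarrow> v \<in> X \<Longrightarrow> E' u v = E u v" and "isk4_in E X"
  shows "isk4_in E' X"
proof -
  obtain br p where "isk4_model E X br p" using assms(2) unfolding isk4_in_iff_model by blast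
  then have "isk4_model E' X br p" by (rule isk4_model.model_cong) (rule assms(1))
  then show ?thesis unfolding isk4_in_iff_model by blast
qed

lemma hole_cong:
  assumes "\<And>u v. u \<in> H \<Longrightarrow> v \<in> H \<Longrightarrow> E' u v = E u v" and "hole E H"
  shows "hole E' H"
proof -
  obtain cs where "distinct cs" "length cs \<ge> 4" "set cs = H"
    "\<forall>u\<in>H. \<forall>v\<in>H. u \<noteq> v \<longrightarrow> (E u v \<longleftrightarrow> consec_cyc cs u v)"
    using assms(2) unfolding hole_def by blast
  then show ?thesis unfolding hole_def using assms(1) by (intro exI[of _ cs]) auto
qed

lemma wheel_in_cong:
  assumes ag: "\<And>u v. u \<in> X \<Longrightarrow> v \<in> X \<Longrightarrow> E' u v = E u v" and "wheel_in E X"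
  shows "wheel_in E' X"
proof -
  obtain H c where w: "X = insert c H" "c \<notin> H" "hole E H" "card {v \<in> H. E c v} \<ge> 3"
    using assms(2) unfolding wheel_in_def by blast
  have "hole E' H" using hole_cong[OF _ w(3)] ag w(1) by blast
  moreover have "{v \<in> H. E' c v} = {v \<in> H. E c v}" using ag w(1) by auto
  ultimately show ?thesis unfolding wheel_in_def using w by (intro exI[of _ H] exI[of _ c]) simp
qed

lemma consec_two [simp]: "consec [a, b] u v \<longleftrightarrow> {u, v} = {a, b}"
  by (simp add: consec_Cons)

lemma consec_append_Cons:
  "consec (xs @ m # ys) u v \<longleftrightarrow> consec (xs @ [m]) u v \<or> consec (m # ys) u v"
  by (simp add: consec_append) blast

lemma consec_cyc_three_arcs:
  "consec_cyc (s # R1 @ x # R2 @ y # R3) u v \<longleftrightarrow>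
     consec (s # R1 @ [x]) u v \<or> consec (x # R2 @ [y]) u v \<or> consec (y # R3 @ [s]) u v"
proof -
  have "consec_cyc (s # R1 @ x # R2 @ y # R3) u v \<longleftrightarrow>
      consec (s # R1 @ x # R2 @ y # R3) u v \<or> {u, v} = {last (y # R3), s}"
    by (subst consec_cyc_conv_consec) auto
  moreover have "consec (s # R1 @ x # R2 @ y # R3) u v \<longleftrightarrow>
      consec (s # R1 @ [x]) u v \<or> consec (x # R2 @ [y]) u v \<or> consec (y # R3) u v"
    using consec_append_Cons[of "s # R1" x "R2 @ y # R3"] consec_append_Cons[of "x # R2" y R3]
    by simp
  moreover have "consec (y # R3 @ [s]) u v \<longleftrightarrow> consec (y # R3) u v \<or> {u, v} = {last (y # R3), s}"
    using consec_append[of "y # R3" "[s]"] by simp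
  ultimately show ?thesis by blast
qed

lemma isk4_in_cycle_plus_three_spokes:
  fixes E :: "'a \<Rightarrow> 'a \<Rightarrow> bool" and c s x y :: 'a and R1 R2 R3 :: "'a list"
  defines "cs \<equiv> s # R1 @ x # R2 @ y # R3"
  assumes d: "distinct (c # cs)"
    and E_char: "\<And>u v. u \<in> insert c (set cs) \<Longrightarrow> v \<in> insert c (set cs) \<Longrightarrow> u \<noteq> v \<Longrightarrow>
      E u v \<longleftrightarrow> {u, v} = {c, s} \<or> {u, v} = {c, x} \<or> {u, v} = {c, y} \<or> consec_cyc cs u v"
  shows "isk4_in E (insert c (set cs))"
proof -
  \<comment> \<open>branch vertices \<open>c, s, x, y\<close>; the paths are the three spokes and the three arcs of the cycle\<close>
  define br :: "nat \<Rightarrow> 'a" where "br = (!) [c, s, x, y]"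
  define p :: "nat \<Rightarrow> nat \<Rightarrow> 'a list" where
    "p i j = (if i = 0 then [c, br j]
      else if i = 1 then (if j = 2 then s # R1 @ [x] else s # rev R3 @ [y]) else x # R2 @ [y])" for i j
  have br: "br 0 = c" "br 1 = s" "br 2 = x" "br 3 = y" by (simp_all add: br_def)
  have p: "p 0 1 = [c, s]" "p 0 2 = [c, x]" "p 0 3 = [c, y]" "p 1 2 = s # R1 @ [x]"
    "p 1 3 = s # rev R3 @ [y]" "p 2 3 = x # R2 @ [y]" unfolding p_def by (simp_all add: br_def)
  have d4: "distinct [c, s, x, y]" using d unfolding cs_def by auto
  have br_img: "br ` {..<4} = {c, s, x, y}"
    using nth_image[of 4 "[c, s, x, y]"] unfolding br_def by (simp add: lessThan_atLeast0)
  have dd: "c \<noteq> s" "c \<noteq> x" "c \<noteq> y" "c \<notin> set R1" "c \<notin> set R2" "c \<notin> set R3"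
    "s \<noteq> x" "s \<noteq> y" "x \<noteq> y" "s \<notin> set R1" "s \<notin> set R2" "s \<notin> set R3"
    "x \<notin> set R1" "x \<notin> set R2" "x \<notin> set R3" "y \<notin> set R1" "y \<notin> set R2" "y \<notin> set R3"
    "set R1 \<inter> set R2 = {}" "set R1 \<inter> set R3 = {}" "set R2 \<inter> set R3 = {}"
    "distinct R1" "distinct R2" "distinct R3"
    using d unfolding cs_def by auto
  have paths: "(\<exists>i j. i < j \<and> j < 4 \<and> consec (p i j) u v) \<longleftrightarrow>
      {u, v} = {c, s} \<or> {u, v} = {c, x} \<or> {u, v} = {c, y} \<or> consec_cyc cs u v" for u v
  proof -
    have "consec (s # rev R3 @ [y]) u v \<longleftrightarrow> consec (y # R3 @ [s]) u v"
      using consec_rev[of "y # R3 @ [s]"] by simp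
    then show ?thesis unfolding ex_pair_less_4 p cs_def consec_cyc_three_arcs consec_two by argo
  qed
  have "isk4_model E (insert c (set cs)) br p"
  proof
    show "inj_on br {..<4}" unfolding br_def using d4 by (intro inj_on_nth) auto
  next
    fix i j :: nat assume "i < j" "j < 4"
    then have "(i, j) \<in> {(0, 1), (0, 2), (0, 3), (1, 2), (1, 3), (2, 3)}"
      unfolding pairs_less_4[symmetric] by simp
    then show "distinct (p i j) \<and> length (p i j) \<ge> 2 \<and> hd (p i j) = br i \<and> last (p i j) = br j \<and>
        set (butlast (tl (p i j))) \<inter> br ` {..<4} = {}"
      unfolding br_img by (elim insertE emptyE) (simp_all add: p[simplified] br[simplified] butlast_append dd)
  next
    fix i j k l :: nat assume "i < j" "j < 4" "k < l" "l < 4" and ne: "(i, j) \<noteq> (k, l)"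
    then have "(i, j) \<in> {(0, 1), (0, 2), (0, 3), (1, 2), (1, 3), (2, 3)}"
      "(k, l) \<in> {(0, 1), (0, 2), (0, 3), (1, 2), (1, 3), (2, 3)}"
      unfolding pairs_less_4[symmetric] by simp_all
    then show "set (p i j) \<inter> set (p k l) \<subseteq> br ` {..<4}"
      unfolding br_img using ne by (elim insertE emptyE; simp only: p prod.inject; use dd in auto)
  next
    show "insert c (set cs) = (\<Union>i<4. \<Union>j\<in>{i<..<4}. set (p i j))"
      unfolding UN_pairs_less_4 p cs_def by auto
  next
    fix u v assume "u \<in> insert c (set cs)" "v \<in> insert c (set cs)" "u \<noteq> v"
    then show "E u v \<longleftrightarrow> (\<exists>i j. i < j \<and> j < 4 \<and> consec (p i j) u v)"
      by (rule trans[OF E_char paths[symmetric]])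
  qed
  then show ?thesis unfolding isk4_in_iff_model by blast
qed

lemma isk4_in_three_spoke_wheel_arcs:
  fixes E :: "'a \<Rightarrow> 'a \<Rightarrow> bool" and c s x y :: 'a and R1 R2 R3 :: "'a list"
  defines "cs \<equiv> s # R1 @ x # R2 @ y # R3"
  assumes d: "distinct (c # cs)"
    and hole: "\<And>u v. u \<in> set cs \<Longrightarrow> v \<in> set cs \<Longrightarrow> u \<noteq> v \<Longrightarrow> E u v \<longleftrightarrow> consec_cyc cs u v"
    and spokes: "\<And>v. v \<in> set cs \<Longrightarrow> E c v \<longleftrightarrow> v = s \<or> v = x \<or> v = y"
    and sym: "\<And>u v. E u v = E v u"
  shows "isk4_in E (insert c (set cs))"
proof -
  have dd: "c \<noteq> s" "c \<noteq> x" "c \<noteq> y" "c \<notin> set cs" using d unfolding cs_def by auto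
  have spoke_pair: "{c, v} = {c, w} \<longleftrightarrow> v = w" if "c \<noteq> w" for v w
    using that by (auto simp: doubleton_eq_iff)
  have E_center: "E c v \<longleftrightarrow> {c, v} = {c, s} \<or> {c, v} = {c, x} \<or> {c, v} = {c, y} \<or> consec_cyc cs c v"
    if "v \<in> set cs" for v
  proof -
    have "\<not> consec_cyc cs c v" using dd(4) consec_cyc_in_set[of cs c v] by blast
    then show ?thesis using spokes[OF that] spoke_pair dd(1-3) by simp
  qed
  have E_char: "E u v \<longleftrightarrow> {u, v} = {c, s} \<or> {u, v} = {c, x} \<or> {u, v} = {c, y} \<or> consec_cyc cs u v"
    if uv: "u \<in> insert c (set cs)" "v \<in> insert c (set cs)" "u \<noteq> v" for u v
  proof -
    consider "u = c" "v \<in> set cs" | "v = c" "u \<in> set cs" | "u \<in> set cs" "v \<in> set cs" "u \<noteq> c" "v \<noteq> c"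
      using uv by blast
    then show ?thesis
    proof cases
      case 1
      then show ?thesis using E_center by simp
    next
      case 2
      then show ?thesis using E_center[of u] sym[of u v] consec_commute
        by (simp add: insert_commute consec_cyc_def)
    next
      case 3
      then have "{u, v} \<noteq> {c, w}" for w by (auto simp: doubleton_eq_iff)
      then show ?thesis using hole 3 uv(3) by simp
    qed
  qed
  show ?thesis
    by (rule isk4_in_cycle_plus_three_spokes[of c s R1 x R2 y R3 E, folded cs_def, OF d E_char])
qed

lemma isk4_in_three_spoke_wheel:
  fixes E :: "'a \<Rightarrow> 'a \<Rightarrow> bool"
  assumes hole: "hole E H" and cH: "c \<notin> H" and three: "card {v \<in> H. E c v} = 3"
    and sym: "\<And>u v. E u v = E v u"
  shows "isk4_in E (insert c H)"
proof -
  obtain cs where cs: "distinct cs" "set cs = H"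
    and hc: "\<And>u v. u \<in> H \<Longrightarrow> v \<in> H \<Longrightarrow> u \<noteq> v \<Longrightarrow> E u v \<longleftrightarrow> consec_cyc cs u v"
    using hole unfolding hole_def by blast
  obtain s x y where S: "{v \<in> H. E c v} = {s, x, y}" "s \<noteq> x" "x \<noteq> y" "s \<noteq> y"
    using three unfolding card_3_iff by blast
  have spokes: "v \<in> H \<Longrightarrow> E c v \<longleftrightarrow> v = s \<or> v = x \<or> v = y" for v using S(1) by blast
  obtain L1 L2 where cs_split: "cs = L1 @ s # L2"
    using S(1) cs(2) by (metis (no_types, lifting) insertI1 mem_Collect_eq split_list)
  define R where "R = L2 @ L1"
  have R: "set (s # R) = H" "distinct (s # R)" using cs cs_split unfolding R_def by auto
  have rot: "consec_cyc (s # R) u v \<longleftrightarrow> consec_cyc cs u v" for u v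
    unfolding R_def cs_split using consec_cyc_append_commute[of L1 "s # L2"] by simp
  have arcs: "isk4_in E (insert c H)"
    if split: "R = R1 @ a # R2 @ b # R3" and ab: "{a, b} = {x, y}" for R1 R2 R3 a b
  proof -
    have "isk4_in E (insert c (set (s # R1 @ a # R2 @ b # R3)))"
    proof (rule isk4_in_three_spoke_wheel_arcs)
      show "distinct (c # s # R1 @ a # R2 @ b # R3)" using R cH split by auto
      show "E u v \<longleftrightarrow> consec_cyc (s # R1 @ a # R2 @ b # R3) u v"
        if "u \<in> set (s # R1 @ a # R2 @ b # R3)" "v \<in> set (s # R1 @ a # R2 @ b # R3)" "u \<noteq> v" for u v
        using hc[of u v] rot[of u v] R(1) split that by simp
      show "E c v \<longleftrightarrow> v = s \<or> v = a \<or> v = b" if "v \<in> set (s # R1 @ a # R2 @ b # R3)" for v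
        using spokes[of v] R(1) split that ab by (auto simp: doubleton_eq_iff)
    qed (rule sym)
    then show ?thesis using R(1) split by simp
  qed
  \<comment> \<open>walking around the hole from \<open>s\<close>, the other two spokes appear in some order\<close>
  have "x \<in> set R" "y \<in> set R" using R S by auto
  then obtain R1 R' where R1: "R = R1 @ x # R'" by (meson split_list)
  show ?thesis
  proof (cases "y \<in> set R'")
    case True
    then obtain R2 R3 where "R' = R2 @ y # R3" by (meson split_list)
    then show ?thesis using arcs[of R1 x R2 y R3] R1 by simp
  next
    case False
    then have "y \<in> set R1" using \<open>y \<in> set R\<close> R1 S(3) by auto
    then obtain R1a R1b where "R1 = R1a @ y # R1b" by (meson split_list)
    then show ?thesis using arcs[of R1a y R1b x R'] R1 by (simp add: insert_commute)
  qed
qed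

section \<open>Subdividing an edge of an ISK4 or a wheel\<close>

text \<open>\<open>E'\<close> arises from \<open>E\<close> by replacing the edge \<open>ab\<close> of \<open>W\<close> with the path \<open>P\<close>, which meets \<open>W\<close>
  only in its ends.\<close>

locale edge_subdivision =
  fixes E E' :: "'a \<Rightarrow> 'a \<Rightarrow> bool" and W :: "'a set" and a b :: 'a and P :: "'a list"
  assumes a_ne_b: "a \<noteq> b" and E_ab: "E a b"
    and distinct_P: "distinct P" and hd_P: "hd P = a" and last_P: "last P = b"
    and P_W: "set P \<inter> W = {a, b}" and not_consec_ab: "\<not> consec P a b"
    and E'_W: "\<And>u v. u \<in> W \<Longrightarrow> v \<in> W \<Longrightarrow> {u, v} \<noteq> {a, b} \<Longrightarrow> E' u v = E u v"
    and not_E'_ab: "\<not> E' a b"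
    and E'_P: "\<And>u v. u \<in> set P \<Longrightarrow> u \<notin> W \<Longrightarrow> v \<in> W \<union> set P \<Longrightarrow> E' u v = consec P u v"
    and sym_E: "\<And>u v. E u v = E v u" and sym_E': "\<And>u v. E' u v = E' v u"
begin

lemma ab_in: "a \<in> W" "b \<in> W" "a \<in> set P" "b \<in> set P"
  using P_W by auto

lemma E'_eq_E_off_edge:
  assumes "X \<subseteq> W" "\<not> (a \<in> X \<and> b \<in> X)" "u \<in> X" "v \<in> X"
  shows "E' u v = E u v"
proof -
  have "{u, v} \<noteq> {a, b}" using assms(2-4) by (auto simp: doubleton_eq_iff)
  then show ?thesis using E'_W assms(1,3,4) by blast
qed

lemma E'_subdivided:
  assumes YW: "Y \<subseteq> W" and ab: "a \<in> Y" "b \<in> Y"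
    and R: "\<And>u v. u \<in> Y \<Longrightarrow> v \<in> Y \<Longrightarrow> u \<noteq> v \<Longrightarrow> E u v = R u v"
    and R_Y: "\<And>u v. R u v \<Longrightarrow> u \<in> Y \<and> v \<in> Y"
    and u: "u \<in> Y \<union> set P" and v: "v \<in> Y \<union> set P" and uv: "u \<noteq> v"
  shows "E' u v \<longleftrightarrow> (R u v \<and> {u, v} \<noteq> {a, b}) \<or> consec P u v"
proof (cases "u \<in> W \<and> v \<in> W")
  case False
  \<comment> \<open>one end is an inner vertex of \<open>P\<close>, adjacent to nothing but its neighbours on \<open>P\<close>\<close>
  have "E' u v = consec P u v"
  proof (cases "u \<in> W")
    case True
    then have "v \<in> set P" "v \<notin> W" "u \<in> W \<union> set P" using False v YW by auto
    then show ?thesis using E'_P[of v u] sym_E'[of u v] consec_commute[of P u v] by simp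
  next
    case False
    then have "u \<in> set P" "v \<in> W \<union> set P" using u v YW by auto
    then show ?thesis using E'_P[of u v] False by simp
  qed
  moreover have "\<not> R u v" using R_Y False YW by blast
  ultimately show ?thesis by simp
next
  case True
  then have uvY: "u \<in> Y" "v \<in> Y" using u v P_W ab by auto
  have "\<not> consec P u v" if "{u, v} \<noteq> {a, b}"
  proof
    assume "consec P u v"
    then have "u \<in> set P" "v \<in> set P" by (simp_all add: consec_in_set)
    then have "u \<in> {a, b}" "v \<in> {a, b}" using True P_W by auto
    then show False using that uv by auto
  qed
  moreover have "\<not> E' u v" "\<not> consec P u v" if "{u, v} = {a, b}"
  proof -
    have "(u = a \<and> v = b) \<or> (u = b \<and> v = a)" using that by (simp add: doubleton_eq_iff)
    then show "\<not> E' u v" "\<not> consec P u v"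
      using not_E'_ab not_consec_ab sym_E'[of b a] consec_commute[of P b a] by auto
  qed
  ultimately show ?thesis using E'_W[OF True[THEN conjunct1] True[THEN conjunct2]] R[OF uvY uv] by auto
qed

lemma isk4_subdivision:
  assumes XW: "X \<subseteq> W" and isk4: "isk4_in E X"
  shows "\<exists>Y \<subseteq> X \<union> set P. isk4_in E' Y"
proof (cases "a \<in> X \<and> b \<in> X")
  case False
  then have "isk4_in E' X" using isk4_in_cong[OF _ isk4] E'_eq_E_off_edge[OF XW] by blast
  then show ?thesis by blast
next
  case True
  obtain br p where "isk4_model E X br p" using isk4 unfolding isk4_in_iff_model by blast
  then interpret isk4_model E X br p .
  obtain i j where ij: "i < j" "j < 4" "consec (p i j) a b"
    using edges[of a b] True a_ne_b E_ab by blast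
  have pij: "distinct (p i j)" "length (p i j) \<ge> 2" "hd (p i j) = br i" "last (p i j) = br j"
    using path[OF ij(1,2)] by auto
  have P_pij: "set P \<inter> set (p i j) = {a, b}"
    using P_W path_subset[OF ij(1,2)] XW consec_in_set[OF ij(3)] ab_in by blast
  obtain L where L0: "distinct L" "hd L = hd (p i j)" "last L = last (p i j)"
    "set L = set (p i j) \<union> set P" "length L \<ge> length (p i j)"
    and L_consec: "\<And>u v. consec L u v \<longleftrightarrow> (consec (p i j) u v \<and> {u, v} \<noteq> {a, b}) \<or> consec P u v"
    using splice_path[OF pij(1) ij(3) distinct_P hd_P last_P P_pij not_consec_ab] by blast
  have L: "distinct L" "hd L = br i" "last L = br j" "set L = set (p i j) \<union> set P" "length L \<ge> 2"
    using L0 pij by auto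
  define q where "q k l = (if (k, l) = (i, j) then L else p k l)" for k l
  have q_ij: "q i j = L" and q_other: "\<And>k l. (k, l) \<noteq> (i, j) \<Longrightarrow> q k l = p k l"
    unfolding q_def by auto
  have XL: "X \<union> set L = X \<union> set P" using L(4) path_subset[OF ij(1,2)] by auto
  have paths_q: "(\<exists>k l. k < l \<and> l < 4 \<and> consec (q k l) u v) \<longleftrightarrow>
      ((\<exists>k l. k < l \<and> l < 4 \<and> consec (p k l) u v) \<and> {u, v} \<noteq> {a, b}) \<or> consec P u v" for u v
    by (rule replace_path_at_edge[of i j a b q L P, OF ij q_ij q_other L_consec])
  have edges': "E' u v \<longleftrightarrow> (\<exists>k l. k < l \<and> l < 4 \<and> consec (q k l) u v)"
    if "u \<in> X \<union> set L" "v \<in> X \<union> set L" "u \<noteq> v" for u v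
  proof -
    have "E' u v \<longleftrightarrow> ((\<exists>k l. k < l \<and> l < 4 \<and> consec (p k l) u v) \<and> {u, v} \<noteq> {a, b}) \<or> consec P u v"
      using True that XL by (intro E'_subdivided[OF XW _ _ edges])
        (auto dest: consec_in_set intro: path_subset[THEN subsetD])
    with paths_q[of u v] show ?thesis by (simp only:)
  qed
  have "set L \<inter> X \<subseteq> set (p i j)"
    using L(4) P_W XW consec_in_set[OF ij(3)] by auto
  then have "isk4_model E' (X \<union> set L) br q"
    using L by (intro replace_path[OF ij(1,2) _ _ _ _ _ _ q_ij q_other edges']) auto
  then show ?thesis unfolding isk4_in_iff_model XL by blast
qed

lemma hole_subdivision:
  assumes hole: "hole E H" and HW: "H \<subseteq> W" and ab: "a \<in> H" "b \<in> H"
  shows "hole E' (H \<union> set P)"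
proof -
  obtain cs where cs: "distinct cs" "length cs \<ge> 4" "set cs = H"
    and hc: "\<And>u v. u \<in> H \<Longrightarrow> v \<in> H \<Longrightarrow> u \<noteq> v \<Longrightarrow> E u v \<longleftrightarrow> consec_cyc cs u v"
    using hole unfolding hole_def by blast
  have ab_cs: "consec_cyc cs a b" using hc ab a_ne_b E_ab by blast
  have P_cs: "set P \<inter> set cs = {a, b}" using P_W HW ab cs(3) ab_in by blast
  have len: "length cs \<ge> 3" using cs(2) by simp
  obtain cs' where cs': "distinct cs'" "set cs' = set cs \<union> set P" "length cs' \<ge> length cs"
    and cyc': "\<And>u v. consec_cyc cs' u v \<longleftrightarrow> (consec_cyc cs u v \<and> {u, v} \<noteq> {a, b}) \<or> consec P u v"
    using consec_cyc_splice[OF cs(1) len ab_cs a_ne_b distinct_P hd_P last_P P_cs not_consec_ab] by blast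
  have "E' u v \<longleftrightarrow> consec_cyc cs' u v" if "u \<in> set cs'" "v \<in> set cs'" "u \<noteq> v" for u v
    unfolding cyc' using that cs(3) cs'(2)
    by (intro E'_subdivided[OF HW ab hc]) (auto dest: consec_cyc_in_set)
  then show ?thesis unfolding hole_def using cs cs' by (intro exI[of _ cs']) auto
qed

lemma wheel_subdivision_center:
  assumes X: "X = insert c H" "c \<notin> H" and hole: "hole E H" and XW: "X \<subseteq> W"
    and spokes: "card {v \<in> H. E c v} \<ge> 4" and ab: "a \<in> X" "b \<in> X" and c: "c \<in> {a, b}"
  shows "wheel_in E' X"
proof -
  obtain d where d: "{c, d} = {a, b}" "c \<noteq> d" using c a_ne_b by auto
  have "d \<in> H" using d ab X by (auto simp: doubleton_eq_iff)
  \<comment> \<open>the edge \<open>ab\<close> is a spoke, so only the spoke \<open>cd\<close> is lost\<close>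
  have "{u, v} \<noteq> {a, b}" if "u \<in> H" "v \<in> H" for u v
    using that d X(2) by (auto simp: doubleton_eq_iff)
  then have "E' u v = E u v" if "u \<in> H" "v \<in> H" for u v
    using E'_W[of u v] that XW X(1) by auto
  then have "hole E' H" using hole by (rule hole_cong)
  moreover have "{v \<in> H. E' c v} = {v \<in> H. E c v} - {d}"
    using E'_W[of c] not_E'_ab sym_E' d XW X(1) by (auto simp: doubleton_eq_iff)
  moreover have "card ({v \<in> H. E c v} - {d}) \<ge> 3"
  proof -
    have "finite {v \<in> H. E c v}" using hole unfolding hole_def by auto
    then show ?thesis using spokes by (auto simp: card_Diff_singleton_if)
  qed
  ultimately show ?thesis unfolding wheel_in_def using X by (intro exI[of _ H] exI[of _ c]) simp
qed

lemma wheel_subdivision_rim: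
  assumes X: "X = insert c H" "c \<notin> H" and hole: "hole E H" and XW: "X \<subseteq> W"
    and spokes: "card {v \<in> H. E c v} \<ge> 3" and ab: "a \<in> H" "b \<in> H" and c: "c \<notin> {a, b}"
  shows "wheel_in E' (insert c (H \<union> set P))"
proof -
  have c_P: "c \<notin> set P" using P_W XW X(1) c by auto
  have "{v \<in> H \<union> set P. E' c v} = {v \<in> H. E c v}"
  proof -
    have "E' c v = E c v" if "v \<in> H" for v
      using E'_W[of c v] that c XW X(1) by (auto simp: doubleton_eq_iff)
    moreover have "\<not> E' c v" if "v \<in> set P" "v \<notin> H" for v
      using E'_P[of v c] sym_E' that c_P XW X(1) P_W ab consec_in_set by fastforce
    ultimately show ?thesis by auto
  qed
  then show ?thesis unfolding wheel_in_def
    using hole_subdivision[OF hole _ ab] XW X c_P spokes by (intro exI[of _ "H \<union> set P"] exI[of _ c]) auto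
qed

lemma wheel_subdivision:
  assumes XW: "X \<subseteq> W" and wheel: "wheel_in E X"
  shows "\<exists>Y \<subseteq> X \<union> set P. isk4_in E' Y \<or> wheel_in E' Y"
proof (cases "a \<in> X \<and> b \<in> X")
  case False
  then have "wheel_in E' X" using wheel_in_cong[OF _ wheel] E'_eq_E_off_edge[OF XW] by blast
  then show ?thesis by blast
next
  case True
  obtain H c where X: "X = insert c H" "c \<notin> H" and hole: "hole E H"
    and spokes: "card {v \<in> H. E c v} \<ge> 3"
    using wheel unfolding wheel_in_def by blast
  consider "card {v \<in> H. E c v} = 3" | "card {v \<in> H. E c v} \<ge> 4" "c \<in> {a, b}"
    | "card {v \<in> H. E c v} \<ge> 4" "c \<notin> {a, b}"
    using spokes by linarith
  then show ?thesis
  proof cases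
    case 1
    then have "isk4_in E X" using isk4_in_three_spoke_wheel[OF hole X(2) _ sym_E] X(1) by simp
    then show ?thesis using isk4_subdivision[OF XW] by blast
  next
    case 2
    then show ?thesis using wheel_subdivision_center[OF X hole XW _ _ _] True by blast
  next
    case 3
    then have "a \<in> H" "b \<in> H" using True X(1) by auto
    then have "wheel_in E' (insert c (H \<union> set P))"
      using wheel_subdivision_rim[OF X hole XW spokes] 3(2) by blast
    moreover have "insert c (H \<union> set P) \<subseteq> X \<union> set P" using X(1) by auto
    ultimately show ?thesis by blast
  qed
qed

end

section \<open>Realizations of trigraphs and of their blocks\<close>

lemma realizationI:
  assumes "\<And>u v. E u v \<Longrightarrow> u \<in> V \<and> v \<in> V \<and> u \<noteq> v \<and> E v u"
    and "\<And>u v. u \<in> V \<Longrightarrow> v \<in> V \<Longrightarrow> u \<noteq> v \<Longrightarrow> th u v = 1 \<Longrightarrow> E u v"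
    and "\<And>u v. u \<in> V \<Longrightarrow> v \<in> V \<Longrightarrow> u \<noteq> v \<Longrightarrow> th u v = -1 \<Longrightarrow> \<not> E u v"
  shows "realization V th E"
  using assms unfolding realization_def by blast

lemma realizationD:
  assumes "realization V th E"
  shows "E u v \<Longrightarrow> u \<in> V \<and> v \<in> V \<and> u \<noteq> v \<and> E v u"
    and "u \<in> V \<Longrightarrow> v \<in> V \<Longrightarrow> u \<noteq> v \<Longrightarrow> th u v = 1 \<Longrightarrow> E u v"
    and "u \<in> V \<Longrightarrow> v \<in> V \<Longrightarrow> u \<noteq> v \<Longrightarrow> th u v = -1 \<Longrightarrow> \<not> E u v"
  using assms unfolding realization_def by blast+

lemma trigraph_sym: "trigraph V th \<Longrightarrow> u \<in> V \<Longrightarrow> v \<in> V \<Longrightarrow> u \<noteq> v \<Longrightarrow> th u v = th v u"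
  unfolding trigraph_def by blast

lemma realization_glue:
  assumes tri: "trigraph V th" and WV: "W \<subseteq> V" and UV: "U \<subseteq> V"
    and E: "realization W th E" and F: "realization U th F"
    and EF: "\<And>u v. u \<in> W \<inter> U \<Longrightarrow> v \<in> W \<inter> U \<Longrightarrow> E u v = F u v"
  shows "\<exists>G. realization V th G \<and> (\<forall>u\<in>W. \<forall>v\<in>W. G u v = E u v) \<and> (\<forall>u\<in>U. \<forall>v\<in>U. G u v = F u v)"
proof -
  \<comment> \<open>outside \<open>W\<close> and \<open>U\<close>, every semi-adjacent pair is realized as a non-edge\<close>
  define G where "G u v = (if u \<in> W \<and> v \<in> W then E u v else if u \<in> U \<and> v \<in> U then F u v
    else u \<in> V \<and> v \<in> V \<and> u \<noteq> v \<and> th u v = 1)" for u v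
  have "realization V th G"
  proof (rule realizationI)
    fix u v assume G: "G u v"
    show "u \<in> V \<and> v \<in> V \<and> u \<noteq> v \<and> G v u"
    proof (cases "u \<in> W \<and> v \<in> W")
      case True
      then have "E u v" using G unfolding G_def by simp
      from realizationD(1)[OF E this] show ?thesis using WV unfolding G_def by auto
    next
      case notW: False
      show ?thesis
      proof (cases "u \<in> U \<and> v \<in> U")
        case True
        then have "F u v" using G notW unfolding G_def by simp
        from realizationD(1)[OF F this] show ?thesis using UV notW unfolding G_def by auto
      next
        case False
        then have "u \<in> V" "v \<in> V" "u \<noteq> v" "th u v = 1" using G notW unfolding G_def by simp_all
        then show ?thesis using notW False trigraph_sym[OF tri, of u v] unfolding G_def by auto
      qed
    qed
  next
    fix u v assume "u \<in> V" "v \<in> V" "u \<noteq> v"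
    then show "th u v = 1 \<Longrightarrow> G u v" "th u v = -1 \<Longrightarrow> \<not> G u v"
      using realizationD(2,3)[OF E, of u v] realizationD(2,3)[OF F, of u v] unfolding G_def by auto
  qed
  moreover have "\<forall>u\<in>W. \<forall>v\<in>W. G u v = E u v" unfolding G_def by simp
  moreover have "\<forall>u\<in>U. \<forall>v\<in>U. G u v = F u v" using EF unfolding G_def by simp
  ultimately show ?thesis by blast
qed

lemma isk4_wheel_free_subset:
  assumes tri: "trigraph V th" and free: "isk4_wheel_free V th" and WV: "W \<subseteq> V"
  shows "isk4_wheel_free W th"
  unfolding isk4_wheel_free_def
proof (intro allI impI notI)
  fix E assume E: "realization W th E" and "\<exists>X\<subseteq>W. isk4_in E X \<or> wheel_in E X"
  then obtain X where X: "X \<subseteq> W" "isk4_in E X \<or> wheel_in E X" by blast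
  obtain G where G: "realization V th G" "\<forall>u\<in>W. \<forall>v\<in>W. G u v = E u v"
    using realization_glue[OF tri WV WV E E refl] by blast
  have "G u v = E u v" if "u \<in> X" "v \<in> X" for u v using G(2) X(1) that by blast
  then have "isk4_in G X \<or> wheel_in G X"
    using X(2) isk4_in_cong[of X G E] wheel_in_cong[of X G E] by blast
  then show False using free G(1) X(1) WV unfolding isk4_wheel_free_def by blast
qed

lemma realization_narrow_path:
  assumes "distinct p" "\<forall>u\<in>set p. \<forall>v\<in>set p. u \<noteq> v \<longrightarrow> (th u v \<ge> 0 \<longleftrightarrow> consec p u v)"
  shows "realization (set p) th (consec p)"
proof (rule realizationI)
  fix u v assume "consec p u v"
  then show "u \<in> set p \<and> v \<in> set p \<and> u \<noteq> v \<and> consec p v u"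
    using consec_in_set consec_irrefl[OF assms(1)] consec_commute by metis
next
  fix u v assume "u \<in> set p" "v \<in> set p" "u \<noteq> v"
  then show "th u v = 1 \<Longrightarrow> consec p u v" "th u v = -1 \<Longrightarrow> \<not> consec p u v"
    using assms(2)[rule_format, of u v] by simp_all
qed

lemma block_theta_clique:
  assumes "strong_clique V th C"
  shows "block_theta th C = th"
proof -
  have "\<not> (\<exists>a b. a \<noteq> b \<and> C = {a, b} \<and> th a b \<le> 0)"
    using assms unfolding strong_clique_def by fastforce
  then show ?thesis unfolding block_theta_def by (rule if_not_P)
qed

lemma realization_block_stable:
  assumes E: "realization W (block_theta th {a, b}) E" and ab: "a \<noteq> b" "th a b \<le> 0" "th b a = th a b"
  shows "realization W th (\<lambda>u v. E u v \<and> ({u, v} = {a, b} \<longrightarrow> th a b = 0))"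
proof (rule realizationI)
  have bt: "block_theta th {a, b} u v = th u v" if "\<not> (u \<noteq> v \<and> {u, v} = {a, b})" for u v
    using that ab unfolding block_theta_def by auto
  have th_ab: "th u v = th a b" if "{u, v} = {a, b}" for u v
    using that ab(3) by (auto simp: doubleton_eq_iff)
  {
    fix u v assume "E u v \<and> ({u, v} = {a, b} \<longrightarrow> th a b = 0)"
    then show "u \<in> W \<and> v \<in> W \<and> u \<noteq> v \<and> E v u \<and> ({v, u} = {a, b} \<longrightarrow> th a b = 0)"
      using realizationD(1)[OF E, of u v] by (auto simp: insert_commute)
  next
    fix u v assume uv: "u \<in> W" "v \<in> W" "u \<noteq> v"
    {
      assume th_uv: "th u v = 1"
      have "{u, v} \<noteq> {a, b}"
      proof
        assume "{u, v} = {a, b}"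
        then have "th u v = th a b" by (rule th_ab)
        then show False using th_uv ab(2) by simp
      qed
      moreover from this have "block_theta th {a, b} u v = 1" using bt th_uv by simp
      ultimately show "E u v \<and> ({u, v} = {a, b} \<longrightarrow> th a b = 0)"
        using realizationD(2)[OF E uv] by simp
    next
      assume th_uv: "th u v = -1"
      show "\<not> (E u v \<and> ({u, v} = {a, b} \<longrightarrow> th a b = 0))"
      proof (cases "{u, v} = {a, b}")
        case True
        then show ?thesis using th_ab[OF True] th_uv by simp
      next
        case False
        then have "block_theta th {a, b} u v = -1" using bt th_uv by simp
        then show ?thesis using realizationD(3)[OF E uv] by simp
      qed
    }
  }
qed

lemma cut_partition_swap:
  assumes tri: "trigraph V th" and cp: "cut_partition V th A B C"
  shows "cut_partition V th B A C"
proof -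
  have "th u v = -1" if "u \<in> B" "v \<in> A" for u v
  proof -
    have "u \<in> V" "v \<in> V" "u \<noteq> v" "th v u = -1" using cp that unfolding cut_partition_def by auto
    then show ?thesis using trigraph_sym[OF tri] by metis
  qed
  then show ?thesis using cp unfolding cut_partition_def by auto
qed

lemma good_cut_partition_types:
  assumes "good_cut_partition V th A B C"
  shows "strong_clique V th C \<or> (\<exists>a b. a \<noteq> b \<and> C = {a, b} \<and> th a b \<le> 0 \<and>
    narrow_path (A \<union> C) th a b \<and> narrow_path (B \<union> C) th a b)"
proof -
  have "clique_cutset V th C \<or> stable_2cutset V th C \<and>
    (\<exists>a b. a \<noteq> b \<and> C = {a, b} \<and> narrow_path (A \<union> C) th a b \<and> narrow_path (B \<union> C) th a b)"
    using assms unfolding good_cut_partition_def by blast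
  then show ?thesis
  proof
    assume "clique_cutset V th C"
    then show ?thesis unfolding clique_cutset_def by blast
  next
    assume stable: "stable_2cutset V th C \<and>
      (\<exists>a b. a \<noteq> b \<and> C = {a, b} \<and> narrow_path (A \<union> C) th a b \<and> narrow_path (B \<union> C) th a b)"
    then obtain a b where ab: "a \<noteq> b" "C = {a, b}" "narrow_path (A \<union> C) th a b" "narrow_path (B \<union> C) th a b"
      by blast
    have "th a b \<le> 0" using stable ab(1,2) unfolding stable_2cutset_def stable_set_def by auto
    then show ?thesis using ab by blast
  qed
qed

lemma edge_subdivision_across_cut:
  assumes cp: "cut_partition V th A B C" and C: "C = {a, b}" "a \<noteq> b"
    and p: "p \<noteq> []" "distinct p" "hd p = a" "last p = b" "set p \<subseteq> B \<union> C" "\<not> consec p a b"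
    and E: "realization (A \<union> C) th' E" and E_ab: "E a b"
    and G: "realization V th G" "\<forall>u\<in>A \<union> C. \<forall>v\<in>A \<union> C. G u v = (E u v \<and> {u, v} \<noteq> {a, b})"
      "\<forall>u\<in>set p. \<forall>v\<in>set p. G u v = consec p u v"
  shows "edge_subdivision E G (A \<union> C) a b p"
proof
  have AB: "\<And>u v. u \<in> A \<Longrightarrow> v \<in> B \<Longrightarrow> th u v = -1" and disj: "A \<inter> B = {}" "B \<inter> C = {}"
    using cp unfolding cut_partition_def by auto
  have ab_p: "a \<in> set p" "b \<in> set p" using p(1,3,4) by auto
  show "a \<noteq> b" "E a b" "distinct p" "hd p = a" "last p = b" "\<not> consec p a b"
    using C(2) E_ab p(2-4,6) by auto
  show "set p \<inter> (A \<union> C) = {a, b}" using p(5) ab_p disj C(1) by auto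
  show "G u v = E u v" if "u \<in> A \<union> C" "v \<in> A \<union> C" "{u, v} \<noteq> {a, b}" for u v
    using G(2) that by simp
  show "\<not> G a b" using G(2) C by simp
  show "E u v = E v u" for u v using realizationD(1)[OF E] by blast
  show "G u v = G v u" for u v using realizationD(1)[OF G(1)] by blast
  show "G u v = consec p u v" if "u \<in> set p" "u \<notin> A \<union> C" "v \<in> A \<union> C \<union> set p" for u v
  proof (cases "v \<in> set p")
    case True
    then show ?thesis using G(3) that(1) by blast
  next
    case False
    have "u \<in> B" using that(1,2) p(5) by blast
    moreover have "v \<in> A" using that(3) False ab_p C(1) by blast
    ultimately have "th v u = -1" "u \<noteq> v" using AB disj(1) by auto
    then have "\<not> G v u" using realizationD(1,3)[OF G(1), of v u] by auto
    then show ?thesis using False consec_in_set realizationD(1)[OF G(1), of u v] by metis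
  qed
qed

lemma block_edge_subdivision:
  assumes tri: "trigraph V th" and cp: "cut_partition V th A B C"
    and C: "C = {a, b}" "a \<noteq> b" "th a b = -1" and path: "narrow_path (B \<union> C) th a b"
    and E: "realization (A \<union> C) (block_theta th C) E" and E_ab: "E a b"
  obtains G p where "realization V th G" "set p \<subseteq> V" "edge_subdivision E G (A \<union> C) a b p"
proof -
  have WV: "A \<union> C \<subseteq> V" and disj: "A \<inter> B = {}" "A \<inter> C = {}" "B \<inter> C = {}"
    using cp unfolding cut_partition_def by auto
  obtain p where p: "p \<noteq> []" "distinct p" "hd p = a" "last p = b" "set p \<subseteq> B \<union> C"
    and p_adj: "\<forall>u\<in>set p. \<forall>v\<in>set p. u \<noteq> v \<longrightarrow> (th u v \<ge> 0 \<longleftrightarrow> consec p u v)"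
    using path unfolding narrow_path_def by blast
  have pV: "set p \<subseteq> V" using p(5) cp unfolding cut_partition_def by auto
  have ab_p: "a \<in> set p" "b \<in> set p" using p(1,3,4) by auto
  have not_consec_ab: "\<not> consec p a b" using p_adj[rule_format, of a b] ab_p C(2,3) by simp
  \<comment> \<open>drop the edge \<open>ab\<close> and glue in the path instead\<close>
  define E0 where "E0 u v = (E u v \<and> {u, v} \<noteq> {a, b})" for u v
  have "th b a = th a b" using trigraph_sym[OF tri, of b a] WV C(1,2) by auto
  then have E0: "realization (A \<union> C) th E0"
    unfolding E0_def using realization_block_stable[of "A \<union> C" th a b E] E C by simp
  have E0_p: "E0 u v = consec p u v" if "u \<in> (A \<union> C) \<inter> set p" "v \<in> (A \<union> C) \<inter> set p" for u v
  proof -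
    have "u \<in> {a, b}" "v \<in> {a, b}" using that p(5) disj C(1) by auto
    then have "{u, v} = {a, b} \<or> u = v" by auto
    then have "\<not> E0 u v \<and> \<not> consec p u v"
      using realizationD(1)[OF E0, of u v] consec_irrefl[OF p(2), of u] not_consec_ab
        consec_commute[of p b a] unfolding E0_def by (auto simp: doubleton_eq_iff)
    then show ?thesis by simp
  qed
  obtain G where G: "realization V th G" "\<forall>u\<in>A \<union> C. \<forall>v\<in>A \<union> C. G u v = E0 u v"
    "\<forall>u\<in>set p. \<forall>v\<in>set p. G u v = consec p u v"
    using realization_glue[OF tri WV pV E0 realization_narrow_path[OF p(2) p_adj] E0_p] by blast
  have "edge_subdivision E G (A \<union> C) a b p"
    using G unfolding E0_def by (intro edge_subdivision_across_cut[OF cp C(1,2) p not_consec_ab E E_ab])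
  then show ?thesis using that G(1) pV by blast
qed

lemma isk4_wheel_free_block:
  assumes tri: "trigraph V th" and free: "isk4_wheel_free V th" and cp: "cut_partition V th A B C"
    and type: "strong_clique V th C \<or>
      (\<exists>a b. a \<noteq> b \<and> C = {a, b} \<and> th a b \<le> 0 \<and> narrow_path (B \<union> C) th a b)"
  shows "isk4_wheel_free (A \<union> C) (block_theta th C)"
  unfolding isk4_wheel_free_def
proof (intro allI impI notI)
  fix E assume E: "realization (A \<union> C) (block_theta th C) E"
    and "\<exists>X \<subseteq> A \<union> C. isk4_in E X \<or> wheel_in E X"
  then obtain X where X: "X \<subseteq> A \<union> C" "isk4_in E X \<or> wheel_in E X" by blast
  have WV: "A \<union> C \<subseteq> V" using cp unfolding cut_partition_def by auto
  have no_agreeing_realization: False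
    if "realization (A \<union> C) th E'" "\<And>u v. u \<in> X \<Longrightarrow> v \<in> X \<Longrightarrow> E' u v = E u v" for E'
    using isk4_wheel_free_subset[OF tri free WV] that X isk4_in_cong[of X E' E] wheel_in_cong[of X E' E]
    unfolding isk4_wheel_free_def by blast
  from type show False
  proof
    assume "strong_clique V th C"
    then show False using no_agreeing_realization E block_theta_clique by metis
  next
    assume "\<exists>a b. a \<noteq> b \<and> C = {a, b} \<and> th a b \<le> 0 \<and> narrow_path (B \<union> C) th a b"
    then obtain a b where ab: "a \<noteq> b" "C = {a, b}" "th a b \<le> 0" "narrow_path (B \<union> C) th a b"
      by blast
    have th_ab: "th b a = th a b" "th a b \<in> {-1, 0, 1}"
      using tri WV ab(1,2) unfolding trigraph_def by auto
    show False
    proof (cases "E a b \<and> th a b \<noteq> 0")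
      case True
      then have "th a b = -1" using ab(3) th_ab(2) by auto
      then obtain G p where G: "realization V th G" "set p \<subseteq> V" "edge_subdivision E G (A \<union> C) a b p"
        using block_edge_subdivision[OF tri cp ab(2,1) _ ab(4) E] True by blast
      then obtain Y where Y: "Y \<subseteq> X \<union> set p" "isk4_in G Y \<or> wheel_in G Y"
        using edge_subdivision.isk4_subdivision[OF G(3) X(1)]
          edge_subdivision.wheel_subdivision[OF G(3) X(1)] X(2) by blast
      have "Y \<subseteq> V" using Y(1) X(1) WV G(2) by blast
      then show False using free G(1) Y(2) unfolding isk4_wheel_free_def by blast
    next
      case False
      \<comment> \<open>the pair \<open>ab\<close> is not an edge of \<open>E\<close>, or is a semi-adjacent pair of \<open>G\<close> already\<close>
      have "(\<lambda>u v. E u v \<and> ({u, v} = {a, b} \<longrightarrow> th a b = 0)) = E"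
        using False realizationD(1)[OF E, of b a] by (auto simp: fun_eq_iff doubleton_eq_iff)
      moreover have "realization (A \<union> C) (block_theta th {a, b}) E" using E ab(2) by simp
      ultimately have "realization (A \<union> C) th E"
        using realization_block_stable[of "A \<union> C" th a b E] ab(1,3) th_ab(1) by simp
      then show False using no_agreeing_realization by blast
    qed
  qed
qed

theorem proposition4p4:
  fixes V :: "'a set" and th :: "'a \<Rightarrow> 'a \<Rightarrow> int" and A B C :: "'a set"
  assumes "trigraph V th"
    and "isk4_wheel_free V th"
    and "good_cut_partition V th A B C"
  shows "isk4_wheel_free (A \<union> C) (block_theta th C) \<and> isk4_wheel_free (B \<union> C) (block_theta th C)"
proof -
  have cp: "cut_partition V th A B C" using assms(3) unfolding good_cut_partition_def by blast
  show ?thesis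
    using isk4_wheel_free_block[OF assms(1,2) cp]
      isk4_wheel_free_block[OF assms(1,2) cut_partition_swap[OF assms(1) cp]]
      good_cut_partition_types[OF assms(3)] by blast
qed

end
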